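(* Let $G_{P,\mathcal{K}}$ be the closure under R1–R4 of a pattern $P$ with consistent background knowledge $\mathcal{K}$, and let $x\to y$ in $G_{P,\mathcal{K}}$. Then there exists a consistent DAG extension of $G_{P,\mathcal{K}}$ in which every edge that is undirected in $G_{P,\mathcal{K}}$ and incident to $x$ or $y$ is oriented out of $x$ or out of $y$, respectively.
   Context: A PDAG is a graph with directed and undirected edges and no directed cycle. The pattern of a DAG is the graph with the same skeleton in which an edge is directed iff it belongs to a v-structure (a triple $a\to c\leftarrow b$ with $a,b$ non-adjacent). A consistent DAG extension of a PDAG $G$ is a DAG with the same skeleton, the same orientation of every directed edge of $G$, and no v-structures other than those of $G$. A set $\mathcal{K}$ of orientations of undirected edges of $P$ is consistent background knowledge if some DAG with pattern $P$ contains all of them. $G_{P,\mathcal{K}}$ is obtained from $P$ by orienting the edges in $\mathcal{K}$ and then repeatedly applying until none applies: R1: if $k\to i$, $i - j$, $k,j$ non-adjacent, orient $i\to j$; R2: if $i\to k\to j$ and $i - j$, orient $i\to j$; R3: if $i - k$, $i - l$, $i - j$, $k\to j$, $l\to j$, $k,l$ non-adjacent, orient $i\to j$; R4: if $i - k$, $i - l$, $i - j$, $k\to l\to j$, $k,j$ non-adjacent, orient $i\to j$. *)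

theory Defs
  imports Main
begin

text \<open>A (partially directed) graph on a vertex set V is a relation E \<subseteq> V \<times> V:
  an undirected edge a - b is encoded by both pairs (a,b),(b,a) \<in> E,
  a directed edge a \<rightarrow> b by (a,b) \<in> E and (b,a) \<notin> E.\<close>

definition adj :: "('a \<times> 'a) set \<Rightarrow> 'a \<Rightarrow> 'a \<Rightarrow> bool" where
  "adj E a b \<longleftrightarrow> (a,b) \<in> E \<or> (b,a) \<in> E"

definition dir :: "('a \<times> 'a) set \<Rightarrow> 'a \<Rightarrow> 'a \<Rightarrow> bool" where
  "dir E a b \<longleftrightarrow> (a,b) \<in> E \<and> (b,a) \<notin> E"

definition und :: "('a \<times> 'a) set \<Rightarrow> 'a \<Rightarrow> 'a \<Rightarrow> bool" where
  "und E a b \<longleftrightarrow> (a,b) \<in> E \<and> (b,a) \<in> E"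

definition directed_part :: "('a \<times> 'a) set \<Rightarrow> ('a \<times> 'a) set" where
  "directed_part E = {(a,b). dir E a b}"

definition is_pdag :: "'a set \<Rightarrow> ('a \<times> 'a) set \<Rightarrow> bool" where
  "is_pdag V E \<longleftrightarrow> finite V \<and> E \<subseteq> V \<times> V \<and> (\<forall>a. (a,a) \<notin> E) \<and> acyclic (directed_part E)"

definition is_dag :: "'a set \<Rightarrow> ('a \<times> 'a) set \<Rightarrow> bool" where
  "is_dag V E \<longleftrightarrow> finite V \<and> E \<subseteq> V \<times> V \<and> acyclic E"

definition vstruct :: "('a \<times> 'a) set \<Rightarrow> 'a \<Rightarrow> 'a \<Rightarrow> 'a \<Rightarrow> bool" where
  "vstruct E a c b \<longleftrightarrow> dir E a c \<and> dir E b c \<and> a \<noteq> b \<and> \<not> adj E a b"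

definition in_vstruct :: "('a \<times> 'a) set \<Rightarrow> 'a \<Rightarrow> 'a \<Rightarrow> bool" where
  "in_vstruct E u w \<longleftrightarrow> (\<exists>c. vstruct E u w c \<or> vstruct E c w u)"

text \<open>Pattern of a DAG D: same skeleton, an edge is directed iff it lies in a v-structure.\<close>
definition pattern :: "('a \<times> 'a) set \<Rightarrow> ('a \<times> 'a) set" where
  "pattern D = {(a,b). (a,b) \<in> D \<or> ((b,a) \<in> D \<and> \<not> in_vstruct D b a)}"

definition consistent_extension :: "'a set \<Rightarrow> ('a \<times> 'a) set \<Rightarrow> ('a \<times> 'a) set \<Rightarrow> bool" where
  "consistent_extension V G D \<longleftrightarrow>
     is_dag V D \<and>
     (\<forall>a b. adj D a b \<longleftrightarrow> adj G a b) \<and>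
     (\<forall>a b. dir G a b \<longrightarrow> (a,b) \<in> D) \<and>
     (\<forall>a c b. vstruct D a c b \<longrightarrow> vstruct G a c b)"

text \<open>K (a set of orientations (a,b) meaning a \<rightarrow> b of undirected edges of P) is
  consistent background knowledge for the pattern P.\<close>
definition consistent_bk :: "'a set \<Rightarrow> ('a \<times> 'a) set \<Rightarrow> ('a \<times> 'a) set \<Rightarrow> bool" where
  "consistent_bk V P K \<longleftrightarrow>
     (\<forall>(a,b) \<in> K. und P a b) \<and> (\<exists>D. is_dag V D \<and> pattern D = P \<and> K \<subseteq> D)"

definition orient :: "('a \<times> 'a) set \<Rightarrow> 'a \<Rightarrow> 'a \<Rightarrow> ('a \<times> 'a) set" where
  "orient E a b = E - {(b,a)}"

definition orient_all :: "('a \<times> 'a) set \<Rightarrow> ('a \<times> 'a) set \<Rightarrow> ('a \<times> 'a) set" where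
  "orient_all E K = E - {(b,a). (a,b) \<in> K}"

definition meek_applies :: "('a \<times> 'a) set \<Rightarrow> 'a \<Rightarrow> 'a \<Rightarrow> bool" where
  "meek_applies E i j \<longleftrightarrow> und E i j \<and>
     ((\<exists>k. dir E k i \<and> k \<noteq> j \<and> \<not> adj E k j) \<or>
      (\<exists>k. dir E i k \<and> dir E k j) \<or>
      (\<exists>k l. und E i k \<and> und E i l \<and> dir E k j \<and> dir E l j \<and> k \<noteq> l \<and> \<not> adj E k l) \<or>
      (\<exists>k l. und E i k \<and> und E i l \<and> dir E k l \<and> dir E l j \<and> k \<noteq> j \<and> \<not> adj E k j))"

inductive meek_reach :: "('a \<times> 'a) set \<Rightarrow> ('a \<times> 'a) set \<Rightarrow> bool" where
  refl: "meek_reach E E"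
| step: "meek_reach E F \<Longrightarrow> meek_applies F i j \<Longrightarrow> meek_reach E (orient F i j)"

definition meek_closure :: "('a \<times> 'a) set \<Rightarrow> ('a \<times> 'a) set \<Rightarrow> ('a \<times> 'a) set \<Rightarrow> bool" where
  "meek_closure P K G \<longleftrightarrow> meek_reach (orient_all P K) G \<and> (\<forall>i j. \<not> meek_applies G i j)"

end

theory Submission
  imports Defs
begin

text \<open>By soundness of Meek's rules, a DAG with pattern P containing the background knowledge is a
  consistent extension of G = G_{P,K}, and G is closed under R1--R4. Such a graph admits Dor and
  Tarsi's elimination: a potential sink (no outgoing directed edge, and every undirected neighbour
  adjacent to all other neighbours) can be deleted, the remaining graph extended, and all its edges
  directed into it. The undirected edges at x and y end up directed outwards provided x and y are
  never deleted while they still carry undirected edges. As x \<rightarrow> y, x is never a potential sink,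
  so it suffices that a potential sink with an undirected edge is never the only one. That is the
  heart of the proof, an induction on the number of vertices driven by R1--R4 and acyclicity.\<close>

lemma adj_commute: "adj H a b \<longleftrightarrow> adj H b a"
  by (auto simp: adj_def)

lemma und_commute: "und H a b \<longleftrightarrow> und H b a"
  by (auto simp: und_def)

lemma und_imp_adj: "und H a b \<Longrightarrow> adj H a b"
  by (auto simp: und_def adj_def)

lemma dir_imp_adj: "dir H a b \<Longrightarrow> adj H a b"
  by (auto simp: dir_def adj_def)

lemma und_imp_not_dir: "und H a b \<Longrightarrow> \<not> dir H a b"
  by (auto simp: und_def dir_def)

lemma adj_not_dir_imp_und: "adj H a b \<Longrightarrow> \<not> dir H a b \<Longrightarrow> \<not> dir H b a \<Longrightarrow> und H a b"
  by (auto simp: und_def adj_def dir_def)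

lemma adj_not_und_imp_dir: "adj H a b \<Longrightarrow> \<not> und H a b \<Longrightarrow> \<not> dir H b a \<Longrightarrow> dir H a b"
  by (auto simp: und_def adj_def dir_def)

lemma adjE:
  assumes "adj H a b"
  obtains "und H a b" | "dir H a b" | "dir H b a"
  using assms by (auto simp: und_def adj_def dir_def)

lemma adj_Restr [simp]: "adj (Restr H R) a b \<longleftrightarrow> a \<in> R \<and> b \<in> R \<and> adj H a b"
  by (auto simp: adj_def)

lemma dir_Restr [simp]: "dir (Restr H R) a b \<longleftrightarrow> a \<in> R \<and> b \<in> R \<and> dir H a b"
  by (auto simp: dir_def)

lemma und_Restr [simp]: "und (Restr H R) a b \<longleftrightarrow> a \<in> R \<and> b \<in> R \<and> und H a b"
  by (auto simp: und_def)

lemma vstruct_commute: "vstruct H a c b \<longleftrightarrow> vstruct H b c a"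
  by (auto simp: vstruct_def adj_def)

lemma acyclic_no_back_edge: "acyclic D \<Longrightarrow> (a, b) \<in> D\<^sup>+ \<Longrightarrow> (b, a) \<notin> D"
  unfolding acyclic_def by (meson trancl_into_trancl)

lemma finite_acyclic_sink:
  assumes "finite S" "S \<noteq> {}" "acyclic R"
  shows "\<exists>v\<in>S. \<forall>w\<in>S. (v, w) \<notin> R"
proof -
  have "wf ((R \<inter> S \<times> S)\<inverse>)"
    using assms by (intro finite_acyclic_wf_converse) (auto intro: acyclic_subset)
  then obtain v where "v \<in> S" "\<And>w. (w, v) \<in> (R \<inter> S \<times> S)\<inverse> \<Longrightarrow> w \<notin> S"
    using wfE_min assms(2) by (metis ex_in_conv)
  then show ?thesis by blast
qed

section \<open>Patterns and soundness of Meek's rules\<close>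

lemma adj_pattern [simp]: "adj (pattern D) a b \<longleftrightarrow> adj D a b"
  by (auto simp: pattern_def adj_def)

lemma dir_pattern_imp_edge: "dir (pattern D) a b \<Longrightarrow> (a, b) \<in> D"
  by (auto simp: pattern_def dir_def)

lemma vstruct_imp_dir_pattern: "vstruct D a c b \<Longrightarrow> dir (pattern D) a c"
  by (auto simp: pattern_def dir_def vstruct_def in_vstruct_def)

lemma consistent_extension_collider:
  assumes ext: "consistent_extension V F D"
    and "(a, c) \<in> D" "(b, c) \<in> D" "a \<noteq> b" "\<not> adj F a b"
  shows "dir F a c"
proof -
  have ac: "acyclic D" and skel: "adj D a b \<longleftrightarrow> adj F a b"
    and vs: "vstruct D a c b \<Longrightarrow> vstruct F a c b"
    using ext by (auto simp: consistent_extension_def is_dag_def)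
  have "(c, a) \<notin> D" "(c, b) \<notin> D"
    using assms(2,3) acyclic_no_back_edge[OF ac r_into_trancl] by auto
  then have "vstruct D a c b" using assms(2-5) skel by (simp add: vstruct_def dir_def)
  then show ?thesis using vs by (simp add: vstruct_def)
qed

text \<open>If D oriented i - j as j \<rightarrow> i, every rule would yield a directed cycle in D or a
  v-structure of D at i that F lacks.\<close>
lemma meek_applies_sound:
  assumes ext: "consistent_extension V F D" and app: "meek_applies F i j"
  shows "(i, j) \<in> D"
proof (rule ccontr)
  assume "(i, j) \<notin> D"
  have ac: "acyclic D" and skel: "\<And>a b. adj D a b \<longleftrightarrow> adj F a b"
    and dirD: "\<And>a b. dir F a b \<Longrightarrow> (a, b) \<in> D"
    using ext by (auto simp: consistent_extension_def is_dag_def)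
  have other_way: "(b, a) \<in> D" if "und F a b" "(a, b) \<notin> D" for a b
    using that skel[of a b] by (auto simp: adj_def dest: und_imp_adj)
  have no_collider: False
    if "und F a c" "(a, c) \<in> D" "(b, c) \<in> D" "a \<noteq> b" "\<not> adj F a b" for a b c
    using consistent_extension_collider[OF ext that(2-5)] und_imp_not_dir[OF that(1)] by blast
  have ij: "und F i j" using app by (simp add: meek_applies_def)
  then have ji: "(j, i) \<in> D" using other_way \<open>(i, j) \<notin> D\<close> by blast
  have no_path: "(i, a) \<notin> D\<^sup>+" if "(a, j) \<in> D" for a
    using acyclic_no_back_edge[OF ac, of i j] ji that by (meson trancl_into_trancl)
  from app show False
    unfolding meek_applies_def
  proof (elim conjE disjE exE)
    fix k assume "dir F k i" "k \<noteq> j" "\<not> adj F k j"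
    then show False
      using no_collider[of j i k] ij ji dirD und_commute adj_commute by metis
  next
    fix k assume "dir F i k" "dir F k j"
    then show False using no_path dirD by blast
  next
    fix k l assume "und F i k" "und F i l" "dir F k j" "dir F l j" "k \<noteq> l" "\<not> adj F k l"
    moreover have "(k, i) \<in> D" "(l, i) \<in> D"
      using calculation other_way no_path dirD by blast+
    ultimately show False using no_collider[of k i l] by (metis und_commute)
  next
    fix k l assume "und F i k" "und F i l" "dir F k l" "dir F l j" "k \<noteq> j" "\<not> adj F k j"
    moreover have "(i, k) \<notin> D"
      using calculation no_path[of l] dirD by (meson r_into_trancl trancl_into_trancl)
    then have "(k, i) \<in> D" using calculation other_way by blast
    ultimately show False using no_collider[of k i j] ji by (metis und_commute)
  qed
qed

lemma consistent_extension_orient: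
  assumes ext: "consistent_extension V F D" and app: "meek_applies F i j"
  shows "consistent_extension V (orient F i j) D"
proof -
  have ij: "und F i j" using app by (simp add: meek_applies_def)
  have "(i, j) \<in> D" using ext app by (rule meek_applies_sound)
  then have "i \<noteq> j"
    using ext by (auto simp: consistent_extension_def is_dag_def acyclic_def)
  then have "adj (orient F i j) a b \<longleftrightarrow> adj F a b"
    and "dir (orient F i j) a b \<longleftrightarrow> dir F a b \<or> (a, b) = (i, j)" for a b
    using ij by (auto simp: orient_def adj_def dir_def und_def)
  then show ?thesis
    using ext \<open>(i, j) \<in> D\<close> by (auto simp: consistent_extension_def vstruct_def)
qed

lemma meek_reach_consistent_extension:
  "meek_reach E F \<Longrightarrow> consistent_extension V E D \<Longrightarrow> consistent_extension V F D"
  by (induction rule: meek_reach.induct) (auto intro: consistent_extension_orient)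

lemma consistent_extension_orient_all:
  assumes dag: "is_dag V D" and KD: "K \<subseteq> D" and Kund: "\<forall>(a, b) \<in> K. und (pattern D) a b"
  shows "consistent_extension V (orient_all (pattern D) K) D"
proof -
  let ?P = "pattern D" and ?F = "orient_all (pattern D) K"
  have asym: "(b, a) \<notin> D" if "(a, b) \<in> D" for a b
    using dag that acyclic_no_back_edge[of D a b] by (auto simp: is_dag_def)
  have skel: "adj ?F a b \<longleftrightarrow> adj D a b" for a b
  proof
    show "adj ?F a b \<Longrightarrow> adj D a b"
      by (metis Diff_subset adj_def adj_pattern orient_all_def subsetD)
    show "adj D a b \<Longrightarrow> adj ?F a b"
      using Kund KD asym by (auto simp: orient_all_def adj_def und_def pattern_def)
  qed
  have into_D: "(a, b) \<in> D" if "dir ?F a b" for a b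
    using that KD dir_pattern_imp_edge[of D a b] by (auto simp: orient_all_def dir_def)
  have dir_F: "dir ?F a b" if "dir ?P a b" for a b
    using that Kund by (auto simp: orient_all_def dir_def und_def)
  have "vstruct ?F a c b" if "vstruct D a c b" for a c b
    using that dir_F[OF vstruct_imp_dir_pattern] skel vstruct_commute
    by (metis vstruct_def)
  then show ?thesis
    using dag skel into_D by (simp add: consistent_extension_def)
qed

section \<open>Closed extendable PDAGs\<close>

definition meek_closed :: "('a \<times> 'a) set \<Rightarrow> bool" where
  "meek_closed H \<longleftrightarrow> (\<forall>i j. \<not> meek_applies H i j)"

definition extendable :: "'a set \<Rightarrow> ('a \<times> 'a) set \<Rightarrow> bool" where
  "extendable W H \<longleftrightarrow> (\<exists>D. consistent_extension W H D)"

text \<open>Abstracts G_{P,K}: these are the only properties of it that the argument uses.\<close>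
definition mpdag :: "'a set \<Rightarrow> ('a \<times> 'a) set \<Rightarrow> bool" where
  "mpdag W H \<longleftrightarrow> meek_closed H \<and> extendable W H"

lemma mpdag_meek_closure:
  assumes "consistent_bk V P K" and "meek_closure P K G"
  shows "mpdag V G"
proof -
  obtain D where "is_dag V D" "pattern D = P" "K \<subseteq> D" "\<forall>(a, b) \<in> K. und P a b"
    using assms(1) by (auto simp: consistent_bk_def)
  then have "consistent_extension V (orient_all P K) D"
    using consistent_extension_orient_all by blast
  then have "consistent_extension V G D"
    using assms(2) meek_reach_consistent_extension by (auto simp: meek_closure_def)
  then show ?thesis
    using assms(2) by (auto simp: mpdag_def extendable_def meek_closure_def meek_closed_def)
qed

lemma
  assumes "meek_closed H"
  shows meek_closed_R1: "\<lbrakk>dir H k i; k \<noteq> j; \<not> adj H k j\<rbrakk> \<Longrightarrow> \<not> und H i j"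
    and meek_closed_R2: "\<lbrakk>dir H i k; dir H k j\<rbrakk> \<Longrightarrow> \<not> und H i j"
    and meek_closed_R3:
      "\<lbrakk>und H i k; und H i l; dir H k j; dir H l j; k \<noteq> l; \<not> adj H k l\<rbrakk> \<Longrightarrow> \<not> und H i j"
    and meek_closed_R4:
      "\<lbrakk>und H i k; und H i l; dir H k l; dir H l j; k \<noteq> j; \<not> adj H k j\<rbrakk> \<Longrightarrow> \<not> und H i j"
  using assms unfolding meek_closed_def meek_applies_def by blast+

lemma meek_closed_Restr: "meek_closed H \<Longrightarrow> meek_closed (Restr H R)"
  by (simp add: meek_closed_def meek_applies_def)

lemma consistent_extension_Restr:
  assumes "consistent_extension W H D" "R \<subseteq> W"
  shows "consistent_extension R (Restr H R) (Restr D R)"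
  using assms finite_subset acyclic_subset
  by (fastforce simp: consistent_extension_def is_dag_def vstruct_def)

lemma extendable_Restr: "extendable W H \<Longrightarrow> R \<subseteq> W \<Longrightarrow> extendable R (Restr H R)"
  by (auto simp: extendable_def dest: consistent_extension_Restr)

lemma mpdag_Restr: "mpdag W H \<Longrightarrow> R \<subseteq> W \<Longrightarrow> mpdag R (Restr H R)"
  by (auto simp: mpdag_def intro: meek_closed_Restr extendable_Restr)

lemma extendable_finite: "extendable W H \<Longrightarrow> finite W"
  by (auto simp: extendable_def consistent_extension_def is_dag_def)

lemma extendable_adjD:
  assumes "extendable W H" "adj H a b"
  shows "a \<in> W \<and> b \<in> W"
proof -
  obtain D where "D \<subseteq> W \<times> W" "adj D a b"
    using assms by (auto simp: extendable_def consistent_extension_def is_dag_def)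
  then show ?thesis by (auto simp: adj_def)
qed

lemma extendable_irrefl: "extendable W H \<Longrightarrow> \<not> adj H a a"
  unfolding extendable_def consistent_extension_def is_dag_def acyclic_def adj_def
  by (metis r_into_trancl')

lemma extendable_dir_minimal:
  assumes "extendable W H" "finite S" "S \<noteq> {}"
  shows "\<exists>v\<in>S. \<forall>w\<in>S. \<not> dir H v w"
proof -
  obtain D where D: "consistent_extension W H D"
    using assms(1) by (auto simp: extendable_def)
  then have "acyclic D" and "\<And>a b. dir H a b \<Longrightarrow> (a, b) \<in> D"
    by (auto simp: consistent_extension_def is_dag_def)
  then show ?thesis using finite_acyclic_sink[OF assms(2,3)] by blast
qed

lemma extendable_no_dir_triangle:
  assumes "extendable W H" "dir H a b" "dir H b c"
  shows "\<not> dir H c a"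
proof -
  obtain D where "consistent_extension W H D"
    using assms(1) by (auto simp: extendable_def)
  then have "acyclic D" and "\<And>a b. dir H a b \<Longrightarrow> (a, b) \<in> D"
    by (auto simp: consistent_extension_def is_dag_def)
  then show ?thesis
    using assms(2,3) acyclic_no_back_edge by (meson trancl_into_trancl r_into_trancl)
qed

section \<open>Potential sinks\<close>

text \<open>A vertex that can be made a sink: it has no outgoing directed edge, and each undirected
  neighbour is adjacent to all other neighbours, so orienting every edge into it creates no new
  v-structure.\<close>
definition potential_sink :: "'a set \<Rightarrow> ('a \<times> 'a) set \<Rightarrow> 'a \<Rightarrow> bool" where
  "potential_sink W H v \<longleftrightarrow> v \<in> W \<and> (\<forall>w. \<not> dir H v w) \<and>
     (\<forall>u w. und H v u \<longrightarrow> adj H v w \<longrightarrow> w \<noteq> u \<longrightarrow> adj H u w)"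

lemma potential_sink_simplicial:
  "potential_sink W H v \<Longrightarrow> und H v u \<Longrightarrow> adj H v w \<Longrightarrow> w \<noteq> u \<Longrightarrow> adj H u w"
  by (simp add: potential_sink_def)

lemma potential_sink_Restr:
  "potential_sink W H v \<Longrightarrow> v \<in> R \<Longrightarrow> potential_sink R (Restr H R) v"
  by (auto simp: potential_sink_def)

lemma potential_sink_lift:
  assumes "potential_sink R (Restr H R) v" "R \<subseteq> W" "\<forall>w. adj H v w \<longrightarrow> w \<in> R"
  shows "potential_sink W H v"
  using assms unfolding potential_sink_def
  by (metis adj_Restr dir_Restr und_Restr dir_imp_adj und_imp_adj subsetD)

lemma potential_sink_dir_in:
  assumes "potential_sink W H v" "adj H a v" "adj H b v" "a \<noteq> b" "\<not> adj H a b"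
  shows "dir H a v"
  using assms by (auto simp: potential_sink_def adj_commute und_commute elim: adjE)

lemma potential_sink_exists:
  assumes "extendable W H" "W \<noteq> {}"
  shows "\<exists>v. potential_sink W H v"
proof -
  obtain D where D: "consistent_extension W H D"
    using assms(1) by (auto simp: extendable_def)
  then have "finite W" "D \<subseteq> W \<times> W" "acyclic D"
    by (auto simp: consistent_extension_def is_dag_def)
  then obtain v where v: "v \<in> W" "\<And>w. (v, w) \<notin> D"
    using finite_acyclic_sink[OF _ assms(2)] by blast
  have skel: "\<And>a b. adj D a b \<longleftrightarrow> adj H a b" and vs: "\<And>a c b. vstruct D a c b \<Longrightarrow> vstruct H a c b"
    and into_D: "\<And>a b. dir H a b \<Longrightarrow> (a, b) \<in> D"
    using D by (auto simp: consistent_extension_def)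
  have "adj H u w" if "und H v u" "adj H v w" "w \<noteq> u" for u w
  proof (rule ccontr)
    assume "\<not> adj H u w"
    have "(u, v) \<in> D" "(w, v) \<in> D"
      using that(1,2) v(2) skel[of v u] skel[of v w] by (auto simp: adj_def dest: und_imp_adj)
    then have "vstruct D u v w"
      using that(3) \<open>\<not> adj H u w\<close> v(2) skel[of u w] by (auto simp: vstruct_def dir_def)
    then show False using vs that(1) by (auto simp: vstruct_def dir_def und_def)
  qed
  moreover have "\<not> dir H v w" for w using v(2) into_D by blast
  ultimately have "potential_sink W H v" using v(1) by (simp add: potential_sink_def)
  then show ?thesis ..
qed

lemma acyclic_add_edges_into:
  assumes "acyclic R" "\<forall>b. (v, b) \<notin> R" "v \<notin> U"
  shows "acyclic (R \<union> U \<times> {v})"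
proof -
  have "(a, b) \<in> R\<^sup>+ \<or> b = v \<and> a \<noteq> v" if "(a, b) \<in> (R \<union> U \<times> {v})\<^sup>+" for a b
    using that assms(2,3)
    by (induction rule: trancl_induct) (auto dest: tranclD intro: trancl_into_trancl)
  then show ?thesis using assms(1) by (auto simp: acyclic_def)
qed

lemma consistent_extension_add_sink:
  assumes HW: "H \<subseteq> W \<times> W" and irr: "(v, v) \<notin> H" and sink: "potential_sink W H v"
    and ext: "consistent_extension (W - {v}) (Restr H (W - {v})) D"
  shows "consistent_extension W H (D \<union> {u. adj H u v} \<times> {v})"
    (is "consistent_extension W H ?D")
proof -
  have DW: "D \<subseteq> (W - {v}) \<times> (W - {v})" and "finite (W - {v})" "acyclic D"
    and skel: "\<And>a b. adj D a b \<longleftrightarrow> adj (Restr H (W - {v})) a b"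
    and into_D: "\<And>a b. dir (Restr H (W - {v})) a b \<Longrightarrow> (a, b) \<in> D"
    and vs: "\<And>a c b. vstruct D a c b \<Longrightarrow> vstruct (Restr H (W - {v})) a c b"
    using ext by (auto simp: consistent_extension_def is_dag_def)
  have "acyclic ?D"
    using DW irr by (intro acyclic_add_edges_into[OF \<open>acyclic D\<close>]) (auto simp: adj_def)
  moreover have "?D \<subseteq> W \<times> W" using DW HW by (auto simp: adj_def)
  ultimately have dag: "is_dag W ?D" using \<open>finite (W - {v})\<close> by (simp add: is_dag_def)
  have skel': "adj ?D a b \<longleftrightarrow> adj H a b" for a b
    using skel[of a b] DW HW irr by (auto simp: adj_def)
  have "(a, b) \<in> ?D" if "dir H a b" for a b
    using that sink into_D[of a b] HW dir_imp_adj[OF that]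
    by (cases "b = v") (auto simp: potential_sink_def dir_def)
  moreover have "vstruct H a c b" if "vstruct ?D a c b" for a c b
  proof (cases "c = v")
    case True
    then show ?thesis
      using that skel' potential_sink_dir_in[OF sink] adj_commute
      by (metis dir_imp_adj vstruct_def)
  next
    case False
    then have "vstruct D a c b" using that skel' skel by (auto simp: vstruct_def dir_def adj_def)
    then show ?thesis using vs by (auto simp: vstruct_def)
  qed
  ultimately show ?thesis using dag skel' by (simp add: consistent_extension_def)
qed

section \<open>A second potential sink\<close>

text \<open>The strengthened statement proved by induction for second_potential_sink below.\<close>
definition quiet_neighbour :: "'a set \<Rightarrow> ('a \<times> 'a) set \<Rightarrow> 'a \<Rightarrow> 'a \<Rightarrow> bool" where
  "quiet_neighbour W H s z \<longleftrightarrow> mpdag W H \<and> potential_sink W H s \<and> und H s z \<and>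
     (\<forall>m. adj H m s \<longrightarrow> \<not> dir H z m)"

definition far_sink :: "'a set \<Rightarrow> ('a \<times> 'a) set \<Rightarrow> 'a \<Rightarrow> 'a \<Rightarrow> 'a \<Rightarrow> bool" where
  "far_sink W H s z v \<longleftrightarrow> potential_sink W H v \<and> (v = z \<or> v \<noteq> s \<and> \<not> adj H v s)"

lemma quiet_neighbour_Restr:
  "quiet_neighbour W H s z \<Longrightarrow> R \<subseteq> W \<Longrightarrow> s \<in> R \<Longrightarrow> z \<in> R \<Longrightarrow>
    quiet_neighbour R (Restr H R) s z"
  by (auto simp: quiet_neighbour_def intro: mpdag_Restr potential_sink_Restr)

lemma potential_sink_Diff_no_dir:
  assumes ext: "extendable W H" and t: "potential_sink (W - {s}) (Restr H (W - {s})) t"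
    and "a \<noteq> s"
  shows "\<not> dir H t a"
proof
  assume ta: "dir H t a"
  have "t \<in> W - {s}" using t by (simp add: potential_sink_def)
  moreover have "a \<in> W - {s}" using extendable_adjD[OF ext dir_imp_adj[OF ta]] \<open>a \<noteq> s\<close> by blast
  ultimately have "dir (Restr H (W - {s})) t a" using ta by simp
  then show False using t unfolding potential_sink_def by blast
qed

lemma potential_sink_Diff_simplicial:
  assumes ext: "extendable W H" and t: "potential_sink (W - {s}) (Restr H (W - {s})) t"
    and tu: "und H t u" and tw: "adj H t w" and "w \<noteq> u" "u \<noteq> s" "w \<noteq> s"
  shows "adj H u w"
proof -
  have "t \<in> W - {s}" using t by (simp add: potential_sink_def)
  moreover have "u \<in> W" "w \<in> W" using extendable_adjD[OF ext] und_imp_adj[OF tu] tw by blast+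
  ultimately have "und (Restr H (W - {s})) t u" "adj (Restr H (W - {s})) t w"
    using tu tw \<open>u \<noteq> s\<close> \<open>w \<noteq> s\<close> by auto
  then have "adj (Restr H (W - {s})) u w"
    using \<open>w \<noteq> u\<close> by (rule potential_sink_simplicial[OF t])
  then show ?thesis by simp
qed

lemma potential_sink_lift_nonadjacent:
  assumes ext: "extendable W H" and v: "potential_sink (W - {s}) (Restr H (W - {s})) v"
    and "\<not> adj H v s"
  shows "potential_sink W H v"
proof -
  have "\<forall>w. adj H v w \<longrightarrow> w \<in> W - {s}" using \<open>\<not> adj H v s\<close> extendable_adjD[OF ext] by blast
  then show ?thesis using potential_sink_lift[OF v] by blast
qed

lemma far_sink_if_nonadjacent:
  assumes "extendable W H" and v: "potential_sink (W - {s}) (Restr H (W - {s})) v"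
    and "\<not> adj H v s"
  shows "far_sink W H s z v"
proof -
  have "v \<noteq> s" using v by (simp add: potential_sink_def)
  then show ?thesis
    using potential_sink_lift_nonadjacent[OF assms] \<open>\<not> adj H v s\<close> by (simp add: far_sink_def)
qed

lemma potential_sink_insert:
  assumes ext: "extendable W H" and z: "potential_sink (W - {t}) (Restr H (W - {t})) z"
    and zt: "\<not> dir H z t"
    and at_t: "\<And>u w. und H z u \<Longrightarrow> adj H z w \<Longrightarrow> w \<noteq> u \<Longrightarrow> t \<in> {u, w} \<Longrightarrow> adj H u w"
  shows "potential_sink W H z"
proof -
  have z_in: "z \<in> W - {t}" using z by (simp add: potential_sink_def)
  have "\<not> dir H z w" for w
    using potential_sink_Diff_no_dir[OF ext z, of w] zt by (cases "w = t") auto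
  moreover have "adj H u w" if zu: "und H z u" and zw: "adj H z w" and "w \<noteq> u" for u w
  proof (cases "t \<in> {u, w}")
    case True
    then show ?thesis using at_t zu zw \<open>w \<noteq> u\<close> by blast
  next
    case False
    then show ?thesis using potential_sink_Diff_simplicial[OF ext z zu zw \<open>w \<noteq> u\<close>] by blast
  qed
  ultimately show ?thesis using z_in by (simp add: potential_sink_def)
qed

lemma potential_sink_insert_simplicial:
  assumes ext: "extendable W H"
    and t: "potential_sink (W - {s}) (Restr H (W - {s})) t" and st: "und H s t"
    and nbrs: "\<forall>b. adj H t b \<longrightarrow> b \<noteq> s \<longrightarrow> adj H b s"
  shows "potential_sink W H t"
proof (rule potential_sink_insert[OF ext t])
  show "\<not> dir H t s" using st und_commute[of H s t] und_imp_not_dir[of H t s] by simp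
  fix u w assume tu: "und H t u" and tw: "adj H t w" and "w \<noteq> u" "s \<in> {u, w}"
  then consider "u = s" | "w = s" by blast
  then show "adj H u w"
  proof cases
    case 1
    then have "adj H w s" using nbrs tw \<open>w \<noteq> u\<close> by blast
    then show ?thesis using 1 adj_commute[of H w s] by simp
  next
    case 2
    then show ?thesis using nbrs und_imp_adj[OF tu] \<open>w \<noteq> u\<close> by blast
  qed
qed

lemma potential_sink_reinsert:
  assumes ext: "extendable W H" and s: "potential_sink W H s"
    and st: "und H s t" and sz: "und H s z"
    and z: "potential_sink (W - {t}) (Restr H (W - {t})) z" and zt: "\<not> dir H z t"
  shows "potential_sink W H z"
proof (rule potential_sink_insert[OF ext z zt])
  have "s \<noteq> t" using extendable_irrefl[OF ext] und_imp_adj[OF st] by blast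
  have zs: "und H z s" using sz und_commute[of H s z] by simp
  have to_s: "adj H s a" if "adj H z a" "a \<noteq> t" "a \<noteq> s" for a
    using potential_sink_Diff_simplicial[OF ext z zs that(1,3) \<open>s \<noteq> t\<close> that(2)] .
  have to_t: "adj H t a" if "adj H s a" "a \<noteq> t" for a
    using potential_sink_simplicial[OF s st that] .
  have ts: "adj H t s" using und_imp_adj[OF st] adj_commute[of H s t] by simp
  fix u w assume zu: "und H z u" and zw: "adj H z w" and "w \<noteq> u" "t \<in> {u, w}"
  then consider "u = t" "w \<noteq> t" | "w = t" "u \<noteq> t" by blast
  then show "adj H u w"
  proof cases
    case 1
    show ?thesis
    proof (cases "w = s")
      case True
      then show ?thesis using 1 ts by simp
    next
      case False
      then show ?thesis using 1 to_t to_s[OF zw] by blast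
    qed
  next
    case 2
    show ?thesis
    proof (cases "u = s")
      case True
      then show ?thesis using 2 und_imp_adj[OF st] by simp
    next
      case False
      then have "adj H t u" using 2 to_t to_s[OF und_imp_adj[OF zu]] by blast
      then show ?thesis using 2 adj_commute[of H t u] by simp
    qed
  qed
qed

lemma far_sink_simplicial_case:
  assumes IH: "\<And>s' z'. quiet_neighbour (W - {t}) (Restr H (W - {t})) s' z' \<Longrightarrow>
      \<exists>v. far_sink (W - {t}) (Restr H (W - {t})) s' z' v"
    and q: "quiet_neighbour W H s z"
    and t: "potential_sink (W - {s}) (Restr H (W - {s})) t" and st: "und H s t"
    and nbrs: "\<forall>b. adj H t b \<longrightarrow> b \<noteq> s \<longrightarrow> adj H b s"
  shows "\<exists>v. far_sink W H s z v"
proof -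
  have ext: "extendable W H" and s: "potential_sink W H s" and sz: "und H s z"
    and quiet: "\<forall>m. adj H m s \<longrightarrow> \<not> dir H z m"
    using q by (simp_all add: quiet_neighbour_def mpdag_def)
  have t_sink: "potential_sink W H t"
    using ext t st nbrs by (rule potential_sink_insert_simplicial)
  show ?thesis
  proof (cases "t = z")
    case True
    then show ?thesis using t_sink by (auto simp: far_sink_def)
  next
    case False
    let ?R = "W - {t}"
    have "s \<noteq> t" using extendable_irrefl[OF ext] und_imp_adj[OF st] by blast
    then have "s \<in> ?R" using s by (simp add: potential_sink_def)
    moreover have "z \<in> ?R" using False extendable_adjD[OF ext und_imp_adj[OF sz]] by blast
    ultimately have "quiet_neighbour ?R (Restr H ?R) s z"
      by (intro quiet_neighbour_Restr[OF q]) auto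
    then obtain v where v: "far_sink ?R (Restr H ?R) s z v" using IH by blast
    show ?thesis
    proof (cases "v = z")
      case True
      have "\<not> dir H z t" using quiet und_imp_adj[OF st] adj_commute[of H s t] by blast
      then have "potential_sink W H z"
        using potential_sink_reinsert[OF ext s st sz] v True by (simp add: far_sink_def)
      then show ?thesis by (auto simp: far_sink_def)
    next
      case False
      then have v_sink: "potential_sink ?R (Restr H ?R) v" and "v \<noteq> s"
        and "\<not> adj (Restr H ?R) v s"
        using v by (auto simp: far_sink_def)
      moreover have "v \<in> ?R" using v_sink by (simp add: potential_sink_def)
      ultimately have "\<not> adj H v s" using \<open>s \<in> ?R\<close> by simp
      then have "\<not> adj H v t" using nbrs \<open>v \<noteq> s\<close> adj_commute[of H v t] by blast
      then have "potential_sink W H v" by (rule potential_sink_lift_nonadjacent[OF ext v_sink])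
      then show ?thesis using \<open>v \<noteq> s\<close> \<open>\<not> adj H v s\<close> by (auto simp: far_sink_def)
    qed
  qed
qed

lemma quiet_neighbour_Diff:
  assumes mp: "mpdag W H" and t: "potential_sink (W - {s}) (Restr H (W - {s})) t"
    and tu: "und H t u" and "u \<noteq> s"
    and quiet: "\<And>m. adj H m t \<Longrightarrow> m \<noteq> s \<Longrightarrow> \<not> dir H u m"
  shows "quiet_neighbour (W - {s}) (Restr H (W - {s})) t u"
proof -
  have "t \<in> W - {s}" using t by (simp add: potential_sink_def)
  moreover have "u \<in> W"
    using extendable_adjD[OF _ und_imp_adj[OF tu]] mp by (auto simp: mpdag_def)
  ultimately have "und (Restr H (W - {s})) t u" using tu \<open>u \<noteq> s\<close> by simp
  moreover have "\<forall>m. adj (Restr H (W - {s})) m t \<longrightarrow> \<not> dir (Restr H (W - {s})) u m"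
    using quiet by auto
  ultimately show ?thesis using mpdag_Restr[OF mp] t by (simp add: quiet_neighbour_def)
qed

lemma quiet_neighbour_nonadjacent_case:
  assumes mp: "mpdag W H" and s: "potential_sink W H s"
    and t: "potential_sink (W - {s}) (Restr H (W - {s})) t" and st: "und H s t"
    and tu: "und H t u" and u: "u \<noteq> s" "\<not> adj H u s"
    and min: "\<forall>w. adj H t w \<longrightarrow> w \<noteq> s \<longrightarrow> \<not> adj H w s \<longrightarrow> \<not> dir H u w"
  shows "quiet_neighbour (W - {s}) (Restr H (W - {s})) t u"
proof (rule quiet_neighbour_Diff[OF mp t tu u(1)])
  have cl: "meek_closed H" and ext: "extendable W H" using mp by (simp_all add: mpdag_def)
  fix m assume mt: "adj H m t" and "m \<noteq> s"
  show "\<not> dir H u m"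
  proof
    assume um: "dir H u m"
    have tm: "adj H t m" using mt adj_commute[of H m t] by simp
    then have "adj H m s" using min um \<open>m \<noteq> s\<close> by blast
    moreover have "\<not> und H m s" using meek_closed_R1[OF cl um u] .
    moreover have "\<not> dir H s m" using s by (simp add: potential_sink_def)
    ultimately have ms: "dir H m s" by (rule adj_not_und_imp_dir)
    from tm consider "und H t m" | "dir H t m" | "dir H m t" by (rule adjE)
    then show False
    proof cases
      case 1
      then show ?thesis
        using meek_closed_R4[OF cl tu 1 um ms u] st und_commute[of H s t] by simp
    next
      case 2
      then show ?thesis using potential_sink_Diff_no_dir[OF ext t \<open>m \<noteq> s\<close>] by simp
    next
      case 3
      then show ?thesis using meek_closed_R2[OF cl um] tu und_commute[of H t u] by simp
    qed
  qed
qed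

lemma nonadjacent_sink_nonsimplicial_case:
  assumes IH: "\<And>t' u'. quiet_neighbour (W - {s}) (Restr H (W - {s})) t' u' \<Longrightarrow>
      \<exists>v. far_sink (W - {s}) (Restr H (W - {s})) t' u' v"
    and q: "quiet_neighbour W H s z"
    and t: "potential_sink (W - {s}) (Restr H (W - {s})) t" and st: "und H s t"
    and b: "adj H t b" "b \<noteq> s" "\<not> adj H b s"
  shows "\<exists>v. potential_sink (W - {s}) (Restr H (W - {s})) v \<and> \<not> adj H v s"
proof -
  let ?W' = "W - {s}"
  have mp: "mpdag W H" and s: "potential_sink W H s" using q by (simp_all add: quiet_neighbour_def)
  have cl: "meek_closed H" and ext: "extendable W H" using mp by (simp_all add: mpdag_def)
  define S where "S = {b. adj H t b \<and> b \<noteq> s \<and> \<not> adj H b s}"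
  have "S \<subseteq> W" using extendable_adjD[OF ext] by (auto simp: S_def)
  then have "finite S" using extendable_finite[OF ext] by (rule finite_subset)
  moreover have "S \<noteq> {}" using b by (auto simp: S_def)
  ultimately obtain u where "u \<in> S" and min: "\<forall>w\<in>S. \<not> dir H u w"
    using extendable_dir_minimal[OF ext] by blast
  then have tu: "adj H t u" and u: "u \<noteq> s" "\<not> adj H u s" by (auto simp: S_def)
  have "\<not> dir H t u" using potential_sink_Diff_no_dir[OF ext t u(1)] .
  moreover have "\<not> dir H u t"
    using meek_closed_R1[OF cl _ u(1,2)] st und_commute[of H s t] by blast
  ultimately have tu: "und H t u" using adj_not_dir_imp_und[OF tu] by blast
  have "quiet_neighbour ?W' (Restr H ?W') t u"
    using min by (intro quiet_neighbour_nonadjacent_case[OF mp s t st tu u]) (auto simp: S_def)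
  then obtain v where v: "far_sink ?W' (Restr H ?W') t u v" using IH by blast
  have "\<not> adj H v s"
  proof
    assume vs: "adj H v s"
    then have "v \<noteq> u" using u by blast
    then have "potential_sink ?W' (Restr H ?W') v" "v \<noteq> t" "\<not> adj (Restr H ?W') v t"
      using v by (auto simp: far_sink_def)
    then have "v \<noteq> t" "\<not> adj H v t" using t by (auto simp: potential_sink_def)
    moreover have "adj H s v" using vs adj_commute[of H v s] by simp
    ultimately have "adj H t v" using potential_sink_simplicial[OF s st] by blast
    then show False using \<open>\<not> adj H v t\<close> adj_commute[of H t v] by simp
  qed
  then show ?thesis using v by (auto simp: far_sink_def)
qed

lemma sink_parent_und_neighbour:
  assumes mp: "mpdag W H" and s: "potential_sink W H s"
    and t: "potential_sink (W - {s}) (Restr H (W - {s})) t" and ts: "dir H t s"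
    and sz: "und H s z"
  shows "und H t z"
proof -
  have cl: "meek_closed H" and ext: "extendable W H" using mp by (simp_all add: mpdag_def)
  have "t \<noteq> z" using ts und_imp_not_dir[of H z s] sz und_commute[of H s z] by blast
  moreover have "adj H s t" using dir_imp_adj[OF ts] adj_commute[of H t s] by simp
  ultimately have "adj H z t" using potential_sink_simplicial[OF s sz] by blast
  then have tz: "adj H t z" using adj_commute[of H z t] by simp
  have "z \<noteq> s" using extendable_irrefl[OF ext] und_imp_adj[OF sz] by blast
  then have "\<not> dir H t z" by (rule potential_sink_Diff_no_dir[OF ext t])
  moreover have "\<not> dir H z t" using meek_closed_R2[OF cl _ ts] sz und_commute[of H s z] by blast
  ultimately show ?thesis using adj_not_dir_imp_und[OF tz] by blast
qed

lemma sink_parents_adjacent: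
  assumes mp: "mpdag W H" and s: "potential_sink W H s" and sz: "und H s z"
    and t: "potential_sink (W - {s}) (Restr H (W - {s})) t" and ts: "dir H t s"
    and v: "potential_sink (W - {s}) (Restr H (W - {s})) v" and vs: "dir H v s"
    and "t \<noteq> v"
  shows "adj H t v"
proof -
  have "meek_closed H" using mp by (simp add: mpdag_def)
  moreover have "und H z t" "und H z v"
    using sink_parent_und_neighbour[OF mp s t ts sz] sink_parent_und_neighbour[OF mp s v vs sz]
      und_commute[of H z] by blast+
  ultimately show ?thesis
    using meek_closed_R3[OF _ _ _ ts vs \<open>t \<noteq> v\<close>] sz und_commute[of H s z] by blast
qed

text \<open>Each orientation of the triangle y, m, z violates a rule or acyclicity.\<close>
lemma potential_sink_no_bridge:
  assumes mp: "mpdag W H" and s: "potential_sink W H s" and sz: "und H s z"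
    and ym: "dir H y m" and ms: "dir H m s" and y: "y \<noteq> s" "\<not> adj H y s"
    and yz: "adj H y z"
  shows False
proof -
  have cl: "meek_closed H" and ext: "extendable W H" using mp by (simp_all add: mpdag_def)
  have zs: "und H z s" using sz und_commute[of H s z] by simp
  have "\<not> dir H y z" using meek_closed_R1[OF cl _ y] zs by blast
  then have yz': "und H z y \<or> dir H z y" using adjE[OF yz] und_commute[of H y z] by blast
  have "m \<noteq> z" using ms und_imp_not_dir[OF zs] by blast
  moreover have "adj H s m" using dir_imp_adj[OF ms] adj_commute[of H m s] by simp
  ultimately have zm_adj: "adj H z m" using potential_sink_simplicial[OF s sz] by blast
  have "\<not> dir H z m" using meek_closed_R2[OF cl _ ms] zs by blast
  then have zm: "und H z m \<or> dir H m z" using adjE[OF zm_adj] by blast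
  from yz' zm show False
  proof (elim disjE)
    assume "und H z y" "und H z m"
    then show False using meek_closed_R4[OF cl _ _ ym ms y] zs by blast
  next
    assume "und H z y" "dir H m z"
    then show False using meek_closed_R2[OF cl ym] und_commute[of H z y] by blast
  next
    assume "dir H z y" "und H z m"
    then show False using meek_closed_R2[OF cl _ ym] by blast
  next
    assume "dir H z y" "dir H m z"
    then show False using extendable_no_dir_triangle[OF ext ym] by blast
  qed
qed

lemma quiet_neighbour_directed_case:
  assumes mp: "mpdag W H" and s: "potential_sink W H s" and sz: "und H s z"
    and t: "potential_sink (W - {s}) (Restr H (W - {s})) t" and tz: "und H t z"
    and ty: "und H t y" and y: "y \<noteq> s" "\<not> dir H y s"
    and min: "\<forall>w. und H t w \<longrightarrow> w \<noteq> s \<longrightarrow> \<not> dir H w s \<longrightarrow> \<not> dir H y w"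
  shows "quiet_neighbour (W - {s}) (Restr H (W - {s})) t y"
proof (rule quiet_neighbour_Diff[OF mp t ty y(1)])
  have cl: "meek_closed H" and ext: "extendable W H" using mp by (simp_all add: mpdag_def)
  fix m assume mt: "adj H m t" and "m \<noteq> s"
  show "\<not> dir H y m"
  proof
    assume ym: "dir H y m"
    have "adj H t m" using mt adj_commute[of H m t] by simp
    then consider "und H t m" | "dir H t m" | "dir H m t" by (rule adjE)
    then show False
    proof cases
      case 1
      then have ms: "dir H m s" using min ym \<open>m \<noteq> s\<close> by blast
      show False
      proof (cases "adj H y s")
        case True
        have "\<not> dir H s y" using s by (simp add: potential_sink_def)
        then have "und H y s" using adj_not_dir_imp_und[OF True y(2)] by simp
        then show False using meek_closed_R2[OF cl ym ms] by simp
      next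
        case False
        have "z \<noteq> y" using False und_imp_adj[OF sz] adj_commute[of H s z] by blast
        moreover have "z \<noteq> s" using extendable_irrefl[OF ext] und_imp_adj[OF sz] by blast
        ultimately have "adj H y z"
          using potential_sink_Diff_simplicial[OF ext t ty und_imp_adj[OF tz]] y(1) by blast
        then show False using potential_sink_no_bridge[OF mp s sz ym ms y(1) False] by blast
      qed
    next
      case 2
      then show ?thesis using potential_sink_Diff_no_dir[OF ext t \<open>m \<noteq> s\<close>] by simp
    next
      case 3
      then show ?thesis using meek_closed_R2[OF cl ym] ty und_commute[of H t y] by simp
    qed
  qed
qed

text \<open>Were all potential sinks of the graph without s parents of s, any two of them would be
  adjacent; the induction hypothesis, applied to a potential sink t and a direction-minimal
  undirected neighbour y of t that is not a parent of s, yields one that is not adjacent to t.\<close>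
lemma potential_sink_not_into_exists:
  assumes IH: "\<And>t' y'. quiet_neighbour (W - {s}) (Restr H (W - {s})) t' y' \<Longrightarrow>
      \<exists>v. far_sink (W - {s}) (Restr H (W - {s})) t' y' v"
    and q: "quiet_neighbour W H s z"
  shows "\<exists>t. potential_sink (W - {s}) (Restr H (W - {s})) t \<and> \<not> dir H t s"
proof (rule ccontr)
  let ?W' = "W - {s}"
  assume "\<not> ?thesis"
  then have into: "dir H t s" if "potential_sink ?W' (Restr H ?W') t" for t
    using that by blast
  have mp: "mpdag W H" and s: "potential_sink W H s" and sz: "und H s z"
    using q by (simp_all add: quiet_neighbour_def)
  have ext: "extendable W H" using mp by (simp add: mpdag_def)
  have "z \<in> ?W'"
    using extendable_adjD[OF ext und_imp_adj[OF sz]] extendable_irrefl[OF ext] und_imp_adj[OF sz]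
    by auto
  then obtain t where t: "potential_sink ?W' (Restr H ?W') t"
    using potential_sink_exists[OF extendable_Restr[OF ext Diff_subset]] by blast
  have to_z: "und H v z" if "potential_sink ?W' (Restr H ?W') v" for v
    using sink_parent_und_neighbour[OF mp s that into[OF that] sz] .
  define Y where "Y = {y. und H t y \<and> y \<noteq> s \<and> \<not> dir H y s}"
  have "Y \<subseteq> W" using extendable_adjD[OF ext] by (auto simp: Y_def dest: und_imp_adj)
  then have "finite Y" using extendable_finite[OF ext] by (rule finite_subset)
  moreover have "z \<in> Y"
    using to_z[OF t] \<open>z \<in> ?W'\<close> sz und_commute[of H s z] und_imp_not_dir[of H z s]
    by (auto simp: Y_def)
  ultimately obtain y where "y \<in> Y" and min: "\<forall>w\<in>Y. \<not> dir H y w"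
    using extendable_dir_minimal[OF ext] by blast
  then have ty: "und H t y" and y: "y \<noteq> s" "\<not> dir H y s" by (auto simp: Y_def)
  have "quiet_neighbour ?W' (Restr H ?W') t y"
    using min by (intro quiet_neighbour_directed_case[OF mp s sz t to_z[OF t] ty y]) (auto simp: Y_def)
  then obtain v where v: "far_sink ?W' (Restr H ?W') t y v" using IH by blast
  then have v_sink: "potential_sink ?W' (Restr H ?W') v" by (simp add: far_sink_def)
  show False
  proof (cases "v = y")
    case True
    then show False using into[OF v_sink] y(2) by blast
  next
    case False
    then have "t \<noteq> v" "\<not> adj H t v"
      using v t v_sink adj_commute[of H v t] by (auto simp: far_sink_def potential_sink_def)
    then show False
      using sink_parents_adjacent[OF mp s sz t into[OF t] v_sink into[OF v_sink]] by blast
  qed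
qed

text \<open>Remove s and take a potential sink
  t of the rest that does not point into s. If t is not adjacent to s it is already a potential
  sink of the whole graph; otherwise t - s is undirected, and either t is a potential sink of the
  whole graph (then remove t instead and recurse), or t has a neighbour not adjacent to s and the
  induction hypothesis for t yields a potential sink not adjacent to s.\<close>
lemma far_sink_exists:
  assumes "quiet_neighbour W H s z"
  shows "\<exists>v. far_sink W H s z v"
  using assms
proof (induction "card W" arbitrary: W H s z rule: less_induct)
  case less
  let ?W' = "W - {s}"
  have ext: "extendable W H" and s: "potential_sink W H s"
    using less.prems by (simp_all add: quiet_neighbour_def mpdag_def)
  have IH: "\<exists>v. far_sink (W - {a}) (Restr H (W - {a})) b c v"
    if "a \<in> W" "quiet_neighbour (W - {a}) (Restr H (W - {a})) b c" for a b c
    using card_Diff1_less[OF extendable_finite[OF ext] that(1)] that(2) by (rule less.hyps)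
  have "s \<in> W" using s by (simp add: potential_sink_def)
  obtain t where t: "potential_sink ?W' (Restr H ?W') t" and "\<not> dir H t s"
    using potential_sink_not_into_exists[OF IH[OF \<open>s \<in> W\<close>] less.prems] by blast
  show ?case
  proof (cases "adj H t s")
    case False
    then show ?thesis using far_sink_if_nonadjacent[OF ext t] by blast
  next
    case True
    have "\<not> dir H s t" using s by (simp add: potential_sink_def)
    then have st: "und H s t"
      using adj_not_dir_imp_und[OF True \<open>\<not> dir H t s\<close>] und_commute[of H t s] by simp
    show ?thesis
    proof (cases "\<forall>b. adj H t b \<longrightarrow> b \<noteq> s \<longrightarrow> adj H b s")
      case True
      have "t \<in> W" using t by (simp add: potential_sink_def)
      from IH[OF this] show ?thesis by (rule far_sink_simplicial_case[OF _ less.prems t st True])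
    next
      case False
      then obtain b where "adj H t b" "b \<noteq> s" "\<not> adj H b s" by blast
      then obtain v where "potential_sink ?W' (Restr H ?W') v" "\<not> adj H v s"
        using nonadjacent_sink_nonsimplicial_case[OF IH[OF \<open>s \<in> W\<close>] less.prems t st] by blast
      then show ?thesis using far_sink_if_nonadjacent[OF ext] by blast
    qed
  qed
qed

lemma second_potential_sink:
  assumes mp: "mpdag W H" and s: "potential_sink W H s" and su: "und H s u"
  shows "\<exists>v. potential_sink W H v \<and> v \<noteq> s"
proof -
  have cl: "meek_closed H" and ext: "extendable W H" using mp by (simp_all add: mpdag_def)
  let ?N = "{z. und H s z}"
  have "?N \<subseteq> W" using extendable_adjD[OF ext] by (auto dest: und_imp_adj)
  then have "finite ?N" using extendable_finite[OF ext] by (rule finite_subset)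
  moreover have "?N \<noteq> {}" using su by blast
  ultimately have "\<exists>z\<in>?N. \<forall>w\<in>?N. \<not> dir H z w" by (rule extendable_dir_minimal[OF ext])
  then obtain z where sz: "und H s z" and min: "\<forall>w. und H s w \<longrightarrow> \<not> dir H z w" by blast
  have "\<not> dir H z m" if "adj H m s" for m
  proof
    assume zm: "dir H z m"
    have "\<not> und H m s" using min zm und_commute[of H m s] by blast
    moreover have "\<not> dir H s m" using s by (simp add: potential_sink_def)
    ultimately have "dir H m s" using adj_not_und_imp_dir[OF that] by simp
    then show False using meek_closed_R2[OF cl zm] sz und_commute[of H s z] by simp
  qed
  then have "quiet_neighbour W H s z" using mp s sz by (simp add: quiet_neighbour_def)
  then have "\<exists>v. far_sink W H s z v" by (rule far_sink_exists)
  then obtain v where "far_sink W H s z v" ..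
  moreover have "z \<noteq> s" using extendable_irrefl[OF ext] und_imp_adj[OF sz] by blast
  ultimately show ?thesis by (auto simp: far_sink_def)
qed

section \<open>Directing the undirected edges at a set of vertices outwards\<close>

text \<open>Two potential sinks have no directed edge between them, so at most one vertex of A is a
  potential sink; if it has an undirected edge, another potential sink lies outside A.\<close>
lemma removable_potential_sink:
  assumes mp: "mpdag W H" and "W \<noteq> {}"
    and A: "\<forall>a\<in>A. \<forall>b\<in>A. a \<noteq> b \<longrightarrow> dir H a b \<or> dir H b a"
  shows "\<exists>v. potential_sink W H v \<and> (v \<in> A \<longrightarrow> (\<forall>u. \<not> und H v u))"
proof -
  obtain s where s: "potential_sink W H s"
    using potential_sink_exists[OF _ \<open>W \<noteq> {}\<close>] mp by (auto simp: mpdag_def)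
  show ?thesis
  proof (cases "s \<in> A \<longrightarrow> (\<forall>u. \<not> und H s u)")
    case True
    then show ?thesis using s by blast
  next
    case False
    then obtain u where "s \<in> A" "und H s u" by blast
    then obtain v where v: "potential_sink W H v" "v \<noteq> s"
      using second_potential_sink[OF mp s] by blast
    have "v \<notin> A"
    proof
      assume "v \<in> A"
      then have "dir H s v \<or> dir H v s" using A \<open>s \<in> A\<close> v(2) by blast
      then show False using s v(1) unfolding potential_sink_def by blast
    qed
    then show ?thesis using v by blast
  qed
qed

lemma consistent_extension_empty: "consistent_extension {} {} {}"
  using acyclicI[of "{}"] by (simp add: consistent_extension_def is_dag_def adj_def dir_def vstruct_def)

lemma mpdag_extension_out_of:
  assumes "mpdag W H" and "\<forall>a\<in>A. \<forall>b\<in>A. a \<noteq> b \<longrightarrow> dir H a b \<or> dir H b a"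
  shows "\<exists>D. consistent_extension W H D \<and> (\<forall>a\<in>A. \<forall>z. und H a z \<longrightarrow> (a, z) \<in> D)"
  using assms
proof (induction "card W" arbitrary: W H A rule: less_induct)
  case less
  have mp: "mpdag W H" and A: "\<forall>a\<in>A. \<forall>b\<in>A. a \<noteq> b \<longrightarrow> dir H a b \<or> dir H b a"
    using less.prems by blast+
  have ext: "extendable W H" using mp by (simp add: mpdag_def)
  have HW: "H \<subseteq> W \<times> W" using extendable_adjD[OF ext] by (auto simp: adj_def)
  show ?case
  proof (cases "W = {}")
    case True
    then have "H = {}" using HW by blast
    then show ?thesis using True consistent_extension_empty by (auto simp: und_def)
  next
    case False
    then obtain v where v: "potential_sink W H v" "v \<in> A \<longrightarrow> (\<forall>u. \<not> und H v u)"
      using removable_potential_sink[OF mp _ A] by blast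
    let ?W' = "W - {v}" and ?A' = "A \<inter> (W - {v})"
    have "v \<in> W" using v(1) by (simp add: potential_sink_def)
    have "mpdag ?W' (Restr H ?W')" using mp by (rule mpdag_Restr) blast
    moreover have "\<forall>a\<in>?A'. \<forall>b\<in>?A'. a \<noteq> b \<longrightarrow> dir (Restr H ?W') a b \<or> dir (Restr H ?W') b a"
      using A by auto
    ultimately have "\<exists>D. consistent_extension ?W' (Restr H ?W') D \<and>
        (\<forall>a\<in>?A'. \<forall>z. und (Restr H ?W') a z \<longrightarrow> (a, z) \<in> D)"
      by (rule less.hyps[OF card_Diff1_less[OF extendable_finite[OF ext] \<open>v \<in> W\<close>]])
    then obtain D where D: "consistent_extension ?W' (Restr H ?W') D"
      and out: "\<forall>a\<in>?A'. \<forall>z. und (Restr H ?W') a z \<longrightarrow> (a, z) \<in> D"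
      by blast
    have "(v, v) \<notin> H" using extendable_irrefl[OF ext] by (auto simp: adj_def)
    with HW have "consistent_extension W H (D \<union> {u. adj H u v} \<times> {v})"
      using v(1) D by (rule consistent_extension_add_sink)
    moreover have "(a, z) \<in> D \<union> {u. adj H u v} \<times> {v}" if "a \<in> A" "und H a z" for a z
    proof (cases "z = v")
      case True
      then show ?thesis using und_imp_adj[OF that(2)] by simp
    next
      case False
      have "a \<noteq> v" using v(2) that by blast
      then show ?thesis
        using out that False extendable_adjD[OF ext und_imp_adj[OF that(2)]] by simp
    qed
    ultimately show ?thesis by blast
  qed
qed

theorem mainTheorem17:
  fixes V :: "'a set" and D0 P K G :: "('a \<times> 'a) set" and x y :: 'a
  assumes "is_dag V D0" and "P = pattern D0"
    and "consistent_bk V P K"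
    and "meek_closure P K G"
    and "dir G x y"
  shows "\<exists>D. consistent_extension V G D \<and>
           (\<forall>z. und G x z \<longrightarrow> (x,z) \<in> D) \<and>
           (\<forall>z. und G y z \<longrightarrow> (y,z) \<in> D)"
proof -
  have "mpdag V G" using assms(3,4) by (rule mpdag_meek_closure)
  moreover have "\<forall>a\<in>{x, y}. \<forall>b\<in>{x, y}. a \<noteq> b \<longrightarrow> dir G a b \<or> dir G b a"
    using assms(5) by blast
  ultimately have "\<exists>D. consistent_extension V G D \<and> (\<forall>a\<in>{x, y}. \<forall>z. und G a z \<longrightarrow> (a, z) \<in> D)"
    by (rule mpdag_extension_out_of)
  then show ?thesis by blast
qed

end
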